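(* Let $N\ge3$, $\Omega\subset\mathbb{R}^N$ a bounded domain, $1<p<\infty$, and suppose $Q$, $v$ satisfy hypothesis (H) and the Sobolev hypothesis (S) with constants $M_p>0$, $\sigma>1$. Then for every $f\in\mathring H^{1,p}_Q(\Omega)$ with $f\ne0$, every $r\in[1,\sigma p)$ and every $\varepsilon>0$, $$\int_\Omega\frac{|f|^r}{\|f\|_{L^r_v}^r}\log\Big(\frac{|f|}{\|f\|_{L^r_v}}\Big)\,v\,dx\le\frac{\sigma}{\sigma p-r}\Big(\varepsilon M_p^p\frac{\|\nabla f\|_{\mathcal L^p_Q}^p}{\|f\|_{L^r_v}^p}-\log\varepsilon\Big).$$
   Context: $p'=p/(p-1)$. $Q:\Omega\to\mathbb{R}^{N\times N}$ is measurable, symmetric and positive definite a.e., with $|Q|_{\rm op}\in L^1_{loc}(\Omega)$ ($|\cdot|_{\rm op}$ operator norm; $\sqrt Q$ defined pointwise); $v\ge0$ measurable. Hypothesis (H): $v\in L^1(\Omega)$; $|\sqrt Q(x)|_{\rm op}^p\le v(x)$ a.e.; $|(\sqrt Q)^{-1}|_{\rm op}\in L^{p'}_{loc}(\Omega)$. $L^q_v$ is $L^q$ w.r.t. $v\,dx$. $\mathcal L^p_Q(\Omega)$: vector fields with $\|\vec f\|_{\mathcal L^p_Q}=(\int_\Omega|\sqrt Q\vec f|^pdx)^{1/p}<\infty$. $H^{1,p}_Q(\Omega)$: completion of Lipschitz functions on $\overline\Omega$ under $\|u\|_{L^p_v}+\|\nabla u\|_{\mathcal L^p_Q}$ (elements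 are functions in $L^p_v\cap W^{1,1}_{loc}$ with weak gradient in $\mathcal L^p_Q$); $\mathring H^{1,p}_Q(\Omega)$: closure of $C^{0,1}_c(\Omega)$ in it. Hypothesis (S): $\|u\|_{L^{\sigma p}_v}\le M_p\|\sqrt Q\nabla u\|_{L^p(\Omega)}$ for all $u\in\mathring H^{1,p}_Q(\Omega)$. *)

theory Defs
  imports "HOL-Analysis.Analysis"
begin

definition msqrt :: "real^'n^'n \<Rightarrow> real^'n^'n" where
  "msqrt A = (THE B. transpose B = B \<and> (\<forall>x. 0 \<le> x \<bullet> (B *v x)) \<and> B ** B = A)"

definition opnorm :: "real^'n^'n \<Rightarrow> real" where
  "opnorm A = onorm (\<lambda>x. A *v x)"

definition wnorm :: "(real^'n \<Rightarrow> real) \<Rightarrow> (real^'n) set \<Rightarrow> real \<Rightarrow> (real^'n \<Rightarrow> real) \<Rightarrow> real" where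
  "wnorm v \<Omega> q u = enn2real (\<integral>\<^sup>+x\<in>\<Omega>. ennreal (\<bar>u x\<bar> powr q * v x) \<partial>lebesgue) powr (1 / q)"

definition Qnorm :: "(real^'n \<Rightarrow> real^'n^'n) \<Rightarrow> (real^'n) set \<Rightarrow> real \<Rightarrow> (real^'n \<Rightarrow> real^'n) \<Rightarrow> real" where
  "Qnorm Q \<Omega> p g = enn2real (\<integral>\<^sup>+x\<in>\<Omega>. ennreal (norm (msqrt (Q x) *v g x) powr p) \<partial>lebesgue) powr (1 / p)"

definition lip_c :: "(real^'n) set \<Rightarrow> (real^'n \<Rightarrow> real) \<Rightarrow> bool" where
  "lip_c \<Omega> \<phi> \<longleftrightarrow> (\<exists>C. C-lipschitz_on UNIV \<phi>) \<and>
     (\<exists>K. compact K \<and> K \<subseteq> \<Omega> \<and> (\<forall>x. x \<notin> K \<longrightarrow> \<phi> x = 0))"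

text \<open>H0 Q v Omega p f g: f belongs to the closure of compactly supported Lipschitz
  functions in H^{1,p}_Q(Omega), with gradient g (the element of L^p_Q that is the limit
  of the gradients of the approximating sequence).\<close>
definition H0 :: "(real^'n \<Rightarrow> real^'n^'n) \<Rightarrow> (real^'n \<Rightarrow> real) \<Rightarrow> (real^'n) set \<Rightarrow> real
    \<Rightarrow> (real^'n \<Rightarrow> real) \<Rightarrow> (real^'n \<Rightarrow> real^'n) \<Rightarrow> bool" where
  "H0 Q v \<Omega> p f g \<longleftrightarrow>
     f \<in> borel_measurable lebesgue \<and> g \<in> borel_measurable lebesgue \<and>
     (\<integral>\<^sup>+x\<in>\<Omega>. ennreal (\<bar>f x\<bar> powr p * v x) \<partial>lebesgue) < \<infinity> \<and>
     (\<integral>\<^sup>+x\<in>\<Omega>. ennreal (norm (msqrt (Q x) *v g x) powr p) \<partial>lebesgue) < \<infinity> \<and>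
     (\<exists>\<phi> G. (\<forall>k. lip_c \<Omega> (\<phi> k) \<and> G k \<in> borel_measurable lebesgue \<and>
                 (AE x in lebesgue. x \<in> \<Omega> \<longrightarrow> (\<phi> k has_derivative (\<lambda>h. G k x \<bullet> h)) (at x))) \<and>
        (\<lambda>k. \<integral>\<^sup>+x\<in>\<Omega>. ennreal (\<bar>\<phi> k x - f x\<bar> powr p * v x) \<partial>lebesgue) \<longlonglongrightarrow> 0 \<and>
        (\<lambda>k. \<integral>\<^sup>+x\<in>\<Omega>. ennreal (norm (msqrt (Q x) *v (G k x - g x)) powr p) \<partial>lebesgue) \<longlonglongrightarrow> 0)"

definition hypH :: "(real^'n \<Rightarrow> real^'n^'n) \<Rightarrow> (real^'n \<Rightarrow> real) \<Rightarrow> (real^'n) set \<Rightarrow> real \<Rightarrow> bool" where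
  "hypH Q v \<Omega> p \<longleftrightarrow>
     Q \<in> borel_measurable lebesgue \<and>
     (AE x in lebesgue. x \<in> \<Omega> \<longrightarrow> transpose (Q x) = Q x \<and> (\<forall>y. y \<noteq> 0 \<longrightarrow> 0 < y \<bullet> (Q x *v y))) \<and>
     (\<forall>K. compact K \<and> K \<subseteq> \<Omega> \<longrightarrow> set_integrable lebesgue K (\<lambda>x. opnorm (Q x))) \<and>
     v \<in> borel_measurable lebesgue \<and> (\<forall>x. 0 \<le> v x) \<and>
     set_integrable lebesgue \<Omega> v \<and>
     (AE x in lebesgue. x \<in> \<Omega> \<longrightarrow> opnorm (msqrt (Q x)) powr p \<le> v x) \<and>
     (\<forall>K. compact K \<and> K \<subseteq> \<Omega> \<longrightarrow>
        set_integrable lebesgue K (\<lambda>x. opnorm (matrix_inv (msqrt (Q x))) powr (p / (p - 1))))"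

definition hypS :: "(real^'n \<Rightarrow> real^'n^'n) \<Rightarrow> (real^'n \<Rightarrow> real) \<Rightarrow> (real^'n) set \<Rightarrow> real \<Rightarrow> real \<Rightarrow> real \<Rightarrow> bool" where
  "hypS Q v \<Omega> p \<sigma> M \<longleftrightarrow>
     (\<forall>u gu. H0 Q v \<Omega> p u gu \<longrightarrow>
        (\<integral>\<^sup>+x\<in>\<Omega>. ennreal (\<bar>u x\<bar> powr (\<sigma> * p) * v x) \<partial>lebesgue) < \<infinity> \<and>
        wnorm v \<Omega> (\<sigma> * p) u \<le> M * Qnorm Q \<Omega> p gu)"

end

theory Submission
  imports Defs
begin

text \<open>Write \<open>\<parallel>f\<parallel>\<^sub>s\<close> for the norm of \<open>L\<^sup>s\<^sub>v(\<Omega>)\<close>, \<open>q = \<sigma> p\<close> and \<open>t = \<bar>f\<bar> / \<parallel>f\<parallel>\<^sub>r\<close>.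
  The elementary inequality \<open>(q - r) t\<^sup>r ln t \<le> t\<^sup>q / c - (1 - ln c) t\<^sup>r\<close>, a consequence of
  \<open>ln x \<le> x - 1\<close>, integrated against \<open>v\<close> with \<open>c = (\<parallel>f\<parallel>\<^sub>q / \<parallel>f\<parallel>\<^sub>r)\<^sup>q\<close> yields the
  interpolation bound \<open>(q - r) \<integral> t\<^sup>r ln t v \<le> q ln (\<parallel>f\<parallel>\<^sub>q / \<parallel>f\<parallel>\<^sub>r)\<close>. Hypothesis (S) bounds
  \<open>\<parallel>f\<parallel>\<^sub>q\<close> by \<open>M \<parallel>\<nabla>f\<parallel>\<close>, and \<open>ln K \<le> \<epsilon> K - ln \<epsilon>\<close> finishes the estimate.

  The only delicate point is \<open>\<parallel>f\<parallel>\<^sub>r > 0\<close>: it needs \<open>v > 0\<close> a.e., which follows from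
  \<open>\<bar>\<surd>Q\<bar>\<^sup>p \<le> v\<close> once the positive semidefinite square root of a positive definite \<open>Q(x)\<close> is known
  to exist uniquely (otherwise \<open>msqrt\<close> is an arbitrary value). That is proved from the spectral
  theorem for symmetric matrices.\<close>

section \<open>Square roots of positive semidefinite matrices\<close>

definition psd_matrix :: "real^'n^'n \<Rightarrow> bool" where
  "psd_matrix B \<longleftrightarrow> transpose B = B \<and> (\<forall>x. 0 \<le> x \<bullet> (B *v x))"

definition orthonormal_eigenbasis :: "real^'n^'n \<Rightarrow> (real^'n) set \<Rightarrow> (real^'n) set \<Rightarrow> bool" where
  "orthonormal_eigenbasis A S E \<longleftrightarrow>
     finite E \<and> E \<subseteq> S \<and> pairwise orthogonal E \<and>
     (\<forall>u\<in>E. norm u = 1 \<and> A *v u = (u \<bullet> (A *v u)) *\<^sub>R u) \<and>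
     (\<forall>x\<in>S. x = (\<Sum>u\<in>E. (u \<bullet> x) *\<^sub>R u))"

lemma symmetric_matrix_inner:
  fixes A :: "real^'n^'n"
  assumes "transpose A = A"
  shows "x \<bullet> (A *v y) = (A *v x) \<bullet> y"
  by (metis assms dot_lmul_matrix transpose_matrix_vector)

lemma transpose_diff: "transpose (A - B) = transpose A - transpose (B :: 'a::ab_group_add^'n^'m)"
  by (simp add: transpose_def vec_eq_iff)

lemma symmetric_matrix_of_inner:
  fixes D :: "real^'n^'n"
  assumes "\<And>x y. x \<bullet> (D *v y) = (D *v x) \<bullet> y"
  shows "transpose D = D"
proof -
  have "(transpose D *v x - D *v x) \<bullet> y = 0" for x y
    using assms[of x y] dot_lmul_matrix[of x D y] by (simp add: inner_diff_left)
  then have "transpose D *v x = D *v x" for x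
    by (metis inner_eq_zero_iff right_minus_eq)
  then show ?thesis
    by (simp add: matrix_eq)
qed

lemma quadratic_nonpos_imp_linear_coeff_zero:
  fixes a b :: real
  assumes "\<And>t. 2 * t * a + t\<^sup>2 * b \<le> 0"
  shows "a = 0"
proof (rule ccontr)
  assume "a \<noteq> 0"
  define t where "t = a / (\<bar>b\<bar> + 1)"
  have "t * a > 0"
    using \<open>a \<noteq> 0\<close> by (simp add: t_def power2_eq_square[symmetric] zero_less_divide_iff)
  moreover have "2 + b / (\<bar>b\<bar> + 1) > 0"
    using abs_le_iff[of b] by (simp add: field_simps)
  moreover have "t\<^sup>2 * b = t * a * b / (\<bar>b\<bar> + 1)"
    by (simp add: t_def power2_eq_square)
  then have "2 * t * a + t\<^sup>2 * b = (t * a) * (2 + b / (\<bar>b\<bar> + 1))"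
    by (simp add: algebra_simps)
  ultimately show False
    using assms[of t] by (metis mult_pos_pos not_le)
qed

text \<open>First variation of the Rayleigh quotient at a maximiser \<open>u\<close>: moving in a direction
  \<open>y \<perp> u\<close> changes \<open>q(u + t y) - l \<parallel>u + t y\<parallel>\<^sup>2\<close> by \<open>2 t (y \<bullet> A u) + O(t\<^sup>2)\<close>.\<close>
lemma symmetric_quadratic_max_orthogonal:
  fixes A :: "real^'n^'n"
  assumes sym: "transpose A = A" and S: "subspace S" and uS: "u \<in> S" and un: "norm u = 1"
    and max: "\<And>z. z \<in> S \<Longrightarrow> z \<bullet> (A *v z) \<le> (u \<bullet> (A *v u)) * (norm z)\<^sup>2"
    and yS: "y \<in> S" and yu: "y \<bullet> u = 0"
  shows "y \<bullet> (A *v u) = 0"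
proof (rule quadratic_nonpos_imp_linear_coeff_zero)
  fix t :: real
  let ?l = "u \<bullet> (A *v u)" and ?z = "u + t *\<^sub>R y"
  have "?z \<bullet> (A *v ?z) \<le> ?l * (norm ?z)\<^sup>2"
    using uS yS S by (intro max) (simp add: subspace_add subspace_scale)
  moreover have "(norm ?z)\<^sup>2 = 1 + t\<^sup>2 * (norm y)\<^sup>2"
  proof -
    have "(norm ?z)\<^sup>2 = ?z \<bullet> ?z"
      by (simp add: power2_norm_eq_inner)
    also have "\<dots> = u \<bullet> u + 2 * t * (y \<bullet> u) + t\<^sup>2 * (y \<bullet> y)"
      by (simp add: inner_add_left inner_add_right inner_commute power2_eq_square algebra_simps)
    finally show ?thesis
      using un yu by (simp add: dot_square_norm)
  qed
  moreover have "?z \<bullet> (A *v ?z) = ?l + 2 * t * (y \<bullet> (A *v u)) + t\<^sup>2 * (y \<bullet> (A *v y))"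
    using symmetric_matrix_inner[OF sym, of u y]
    by (simp add: matrix_vector_right_distrib matrix_vector_mult_scaleR inner_add_left
        inner_add_right inner_commute power2_eq_square algebra_simps)
  ultimately show "2 * t * (y \<bullet> (A *v u)) + t\<^sup>2 * (y \<bullet> (A *v y) - ?l * (norm y)\<^sup>2) \<le> 0"
    by (simp add: algebra_simps)
qed

lemma symmetric_eigenvector_exists:
  fixes A :: "real^'n^'n"
  assumes sym: "transpose A = A" and S: "subspace S" and ne: "S \<noteq> {0}"
    and inv: "\<And>x. x \<in> S \<Longrightarrow> A *v x \<in> S"
  obtains u where "u \<in> S" "norm u = 1" "A *v u = (u \<bullet> (A *v u)) *\<^sub>R u"
proof -
  let ?q = "\<lambda>x::real^'n. x \<bullet> (A *v x)"
  let ?K = "S \<inter> sphere 0 1"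
  have K: "compact ?K"
    using S by (simp add: closed_subspace compact_Int_closed closed_Int_compact)
  obtain x0 where "x0 \<in> S" "x0 \<noteq> 0"
    using ne S subspace_0 by blast
  then have "x0 /\<^sub>R norm x0 \<in> ?K"
    using S by (simp add: subspace_scale)
  then have K_ne: "?K \<noteq> {}" by blast
  have q_cont: "continuous_on ?K ?q"
    by (intro continuous_intros linear_continuous_on matrix_vector_mul_linear)
  obtain u where u: "u \<in> ?K" and umax: "\<And>y. y \<in> ?K \<Longrightarrow> ?q y \<le> ?q u"
    using continuous_attains_sup[OF K K_ne q_cont] by blast
  have uS: "u \<in> S" and un: "norm u = 1" using u by auto
  have max: "?q z \<le> ?q u * (norm z)\<^sup>2" if "z \<in> S" for z
  proof (cases "z = 0")
    case False
    then have "?q (z /\<^sub>R norm z) \<le> ?q u"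
      using that S by (intro umax) (simp add: subspace_scale)
    moreover have "?q (z /\<^sub>R norm z) = ?q z / (norm z)\<^sup>2"
      using False by (simp add: matrix_vector_mult_scaleR power2_eq_square field_simps)
    ultimately show ?thesis
      using False by (simp add: divide_le_eq)
  qed simp
  define w where "w = A *v u - ?q u *\<^sub>R u"
  have wS: "w \<in> S"
    unfolding w_def using inv[OF uS] uS S by (simp add: subspace_diff subspace_scale)
  have "u \<bullet> u = 1"
    using un by (simp add: dot_square_norm)
  then have wu: "w \<bullet> u = 0"
    by (simp add: w_def inner_diff_left inner_diff_right inner_commute)
  have "w \<bullet> (A *v u) = 0"
    by (rule symmetric_quadratic_max_orthogonal[OF sym S uS un max wS wu])
  then have "w \<bullet> w = 0"
    using wu by (simp add: w_def inner_diff_right)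
  then show ?thesis
    using that uS un by (simp add: w_def)
qed

lemma symmetric_eigenvector_orthogonal_invariant:
  fixes A :: "real^'n^'n"
  assumes "transpose A = A" and "A *v u = l *\<^sub>R u" and "u \<bullet> x = 0"
  shows "u \<bullet> (A *v x) = 0"
  using assms symmetric_matrix_inner[of A u x] by simp

lemma orthonormal_expansion_insert:
  fixes u x :: "real^'n"
  assumes "finite E" "u \<notin> E" "u \<bullet> u = 1" "\<forall>e\<in>E. e \<bullet> u = 0"
    and "x - (u \<bullet> x) *\<^sub>R u = (\<Sum>e\<in>E. (e \<bullet> (x - (u \<bullet> x) *\<^sub>R u)) *\<^sub>R e)"
  shows "x = (\<Sum>e\<in>insert u E. (e \<bullet> x) *\<^sub>R e)"
proof -
  have "(\<Sum>e\<in>E. (e \<bullet> (x - (u \<bullet> x) *\<^sub>R u)) *\<^sub>R e) = (\<Sum>e\<in>E. (e \<bullet> x) *\<^sub>R e)"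
    using assms(4) by (intro sum.cong) (simp_all add: inner_diff_right)
  then show ?thesis
    using assms(1,2,5) by (simp add: algebra_simps)
qed

theorem symmetric_orthonormal_eigenbasis:
  fixes A :: "real^'n^'n"
  assumes sym: "transpose A = A" and "subspace S" and "\<And>x. x \<in> S \<Longrightarrow> A *v x \<in> S"
  shows "\<exists>E. orthonormal_eigenbasis A S E"
  using assms(2,3)
proof (induction "dim S" arbitrary: S rule: less_induct)
  case less
  show ?case
  proof (cases "S = {0}")
    case True
    then show ?thesis
      by (auto simp: orthonormal_eigenbasis_def intro!: exI[of _ "{}"])
  next
    case False
    obtain u where uS: "u \<in> S" and un: "norm u = 1" and ue: "A *v u = (u \<bullet> (A *v u)) *\<^sub>R u"
      using symmetric_eigenvector_exists[OF sym less.prems(1) False less.prems(2)] by blast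
    have uu: "u \<bullet> u = 1" using un by (simp add: dot_square_norm)
    define S' where "S' = S \<inter> {x. u \<bullet> x = 0}"
    have sub': "subspace S'"
      unfolding S'_def using subspace_inter[OF less.prems(1) subspace_orthogonal_to_vector[of u]]
      by (simp add: orthogonal_def)
    have inv': "A *v x \<in> S'" if "x \<in> S'" for x
      using that less.prems(2) symmetric_eigenvector_orthogonal_invariant[OF sym ue]
      by (simp add: S'_def)
    have "u \<notin> S'"
      using uu by (simp add: S'_def)
    then have "S' \<subset> S"
      using uS unfolding S'_def by blast
    then have "dim S' < dim S"
      using dim_psubset sub' less.prems(1) by (metis span_eq_iff)
    then obtain E' where E': "orthonormal_eigenbasis A S' E'"
      using less.hyps[OF _ sub' inv'] by blast
    then have uE': "u \<notin> E'" and orth: "\<forall>e\<in>E'. e \<bullet> u = 0"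
      using uu by (auto simp: orthonormal_eigenbasis_def S'_def inner_commute)
    have "orthonormal_eigenbasis A S (insert u E')"
      unfolding orthonormal_eigenbasis_def
    proof (intro conjI ballI)
      fix x assume x: "x \<in> S"
      have "x - (u \<bullet> x) *\<^sub>R u \<in> S'"
        using x uS less.prems(1) uu
        by (simp add: S'_def subspace_diff subspace_scale inner_diff_right)
      then show "x = (\<Sum>e\<in>insert u E'. (e \<bullet> x) *\<^sub>R e)"
        using E' uE' uu orth
        by (intro orthonormal_expansion_insert) (auto simp: orthonormal_eigenbasis_def)
    qed (use E' uS un ue orth in \<open>auto simp: orthonormal_eigenbasis_def S'_def pairwise_insert
          orthogonal_def inner_commute\<close>)
    then show ?thesis ..
  qed
qed

lemma psd_quadratic_zero_imp_zero:
  fixes B :: "real^'n^'n"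
  assumes psd: "psd_matrix B" and y: "y \<bullet> (B *v y) = 0"
  shows "B *v y = 0"
proof -
  have "z \<bullet> (B *v y) = 0" for z
  proof -
    have "- (z \<bullet> (B *v y)) = 0"
    proof (rule quadratic_nonpos_imp_linear_coeff_zero)
      fix t :: real
      have "0 \<le> (y + t *\<^sub>R z) \<bullet> (B *v (y + t *\<^sub>R z))"
        using psd by (simp add: psd_matrix_def)
      also have "\<dots> = y \<bullet> (B *v y) + t * (z \<bullet> (B *v y)) + t * (y \<bullet> (B *v z)) + t\<^sup>2 * (z \<bullet> (B *v z))"
        by (simp add: matrix_vector_right_distrib matrix_vector_mult_scaleR inner_add_left
            inner_add_right power2_eq_square algebra_simps)
      also have "y \<bullet> (B *v z) = z \<bullet> (B *v y)"
        using psd symmetric_matrix_inner[of B y z] by (simp add: psd_matrix_def inner_commute)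
      finally show "2 * t * - (z \<bullet> (B *v y)) + t\<^sup>2 * - (z \<bullet> (B *v z)) \<le> 0"
        using y by simp
    qed
    then show ?thesis by simp
  qed
  from this[of "B *v y"] show ?thesis by simp
qed

lemma orthonormal_sum_coeff:
  fixes E :: "(real^'n) set"
  assumes "finite E" "u \<in> E" "\<forall>u\<in>E. norm u = 1" "pairwise orthogonal E"
  shows "u \<bullet> (\<Sum>u'\<in>E. c u' *\<^sub>R u') = c u"
proof -
  have "u \<bullet> (\<Sum>u'\<in>E. c u' *\<^sub>R u') = (\<Sum>u'\<in>E. c u' * (u \<bullet> u'))"
    by (simp add: inner_sum_right)
  also have "\<dots> = c u * (u \<bullet> u) + (\<Sum>u'\<in>E - {u}. c u' * (u \<bullet> u'))"
    using assms(1,2) by (simp add: sum.remove)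
  also have "(\<Sum>u'\<in>E - {u}. c u' * (u \<bullet> u')) = 0"
    using assms(2,4) by (intro sum.neutral) (auto simp: pairwise_def orthogonal_def)
  also have "u \<bullet> u = 1"
    using assms(2,3) by (simp add: dot_square_norm)
  finally show ?thesis by simp
qed

lemma psd_matrix_weighted_sum:
  fixes E :: "(real^'n) set"
  assumes "\<And>u. u \<in> E \<Longrightarrow> 0 \<le> s u"
  shows "psd_matrix (matrix (\<lambda>x. \<Sum>u\<in>E. (s u * (u \<bullet> x)) *\<^sub>R u))"
proof -
  let ?f = "\<lambda>x. \<Sum>u\<in>E. (s u * (u \<bullet> x)) *\<^sub>R u"
  have "linear ?f"
    by (auto intro!: linearI simp: inner_add_right algebra_simps sum.distrib scaleR_sum_right)
  then have form: "x \<bullet> (matrix ?f *v y) = (\<Sum>u\<in>E. s u * (u \<bullet> x) * (u \<bullet> y))" for x y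
    by (simp add: matrix_works inner_sum_right inner_commute algebra_simps)
  show ?thesis
    unfolding psd_matrix_def
  proof
    show "transpose (matrix ?f) = matrix ?f"
    proof (rule symmetric_matrix_of_inner)
      fix x y
      show "x \<bullet> (matrix ?f *v y) = (matrix ?f *v x) \<bullet> y"
        unfolding inner_commute[of "matrix ?f *v x"] form by (simp add: mult_ac)
    qed
    have "0 \<le> s u * ((u \<bullet> x) * (u \<bullet> x))" if "u \<in> E" for u x
      using assms[OF that] by simp
    then show "\<forall>x. 0 \<le> x \<bullet> (matrix ?f *v x)"
      by (simp add: form mult.assoc sum_nonneg)
  qed
qed

text \<open>The square root acts on an orthonormal eigenbasis of \<open>A\<close> by the square roots of
  the (nonnegative) eigenvalues.\<close>
lemma psd_sqrt_exists:
  fixes A :: "real^'n^'n"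
  assumes psd: "psd_matrix A"
  obtains B where "psd_matrix B" "B ** B = A"
proof -
  obtain E where "orthonormal_eigenbasis A UNIV E"
    using symmetric_orthonormal_eigenbasis[of A UNIV] psd by (auto simp: psd_matrix_def)
  then have fin: "finite E" and En: "\<forall>u\<in>E. norm u = 1" and orth: "pairwise orthogonal E"
    and eig: "\<forall>u\<in>E. A *v u = (u \<bullet> (A *v u)) *\<^sub>R u"
    and expansion: "\<And>x. x = (\<Sum>u\<in>E. (u \<bullet> x) *\<^sub>R u)"
    by (auto simp: orthonormal_eigenbasis_def)
  define s where "s u = sqrt (u \<bullet> (A *v u))" for u
  define f where "f x = (\<Sum>u\<in>E. (s u * (u \<bullet> x)) *\<^sub>R u)" for x
  have "psd_matrix (matrix f)"
    unfolding f_def using psd by (intro psd_matrix_weighted_sum) (simp add: s_def psd_matrix_def)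
  moreover have "matrix f ** matrix f = A"
  proof -
    have "linear f"
      unfolding f_def
      by (auto intro!: linearI simp: inner_add_right algebra_simps sum.distrib scaleR_sum_right)
    then have Bx: "matrix f *v x = f x" for x
      by (simp add: matrix_works)
    have coeff: "u \<bullet> f x = s u * (u \<bullet> x)" if "u \<in> E" for u x
      unfolding f_def using orthonormal_sum_coeff[OF fin that En orth] by simp
    have s_sq: "s u * s u = u \<bullet> (A *v u)" for u
      using psd by (simp add: s_def psd_matrix_def)
    have "(matrix f ** matrix f) *v x = A *v x" for x
    proof -
      have "(matrix f ** matrix f) *v x = (\<Sum>u\<in>E. ((u \<bullet> (A *v u)) * (u \<bullet> x)) *\<^sub>R u)"
        unfolding matrix_vector_mul_assoc[symmetric] Bx f_def[of "f x"]
        by (intro sum.cong refl) (simp add: coeff s_sq mult.assoc[symmetric])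
      also have "\<dots> = (\<Sum>u\<in>E. (u \<bullet> x) *\<^sub>R (A *v u))"
        using eig by (intro sum.cong refl) (metis scaleR_scaleR mult.commute)
      also have "\<dots> = A *v (\<Sum>u\<in>E. (u \<bullet> x) *\<^sub>R u)"
        by (simp add: linear_sum[OF matrix_vector_mul_linear] matrix_vector_mult_scaleR)
      finally show ?thesis
        using expansion by metis
    qed
    then show ?thesis
      by (simp add: matrix_eq)
  qed
  ultimately show thesis ..
qed

text \<open>If \<open>(C - B) u = m u\<close> then \<open>0 = u \<bullet> (C\<^sup>2 - B\<^sup>2) u = m (u \<bullet> C u + u \<bullet> B u)\<close>, so either \<open>m = 0\<close>
  or both quadratic forms vanish at \<open>u\<close>.\<close>
lemma psd_sqrt_difference_eigenvector:
  fixes B C :: "real^'n^'n"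
  assumes B: "psd_matrix B" and C: "psd_matrix C" and BC: "B ** B = C ** C"
    and eig: "(C - B) *v u = m *\<^sub>R u"
  shows "(C - B) *v u = 0"
proof -
  have CB: "C *v u - B *v u = m *\<^sub>R u"
    using eig by (simp add: matrix_vector_mult_diff_rdistrib)
  have "u \<bullet> (C *v (C *v u - B *v u)) + u \<bullet> ((C - B) *v (B *v u))
      = u \<bullet> ((C ** C) *v u) - u \<bullet> ((B ** B) *v u)"
    by (simp add: matrix_vector_mul_assoc[symmetric] matrix_vector_mult_diff_rdistrib
        matrix_vector_mult_diff_distrib inner_diff_right)
  also have "\<dots> = 0"
    using BC by simp
  also have "u \<bullet> ((C - B) *v (B *v u)) = ((C - B) *v u) \<bullet> (B *v u)"
    using B C by (intro symmetric_matrix_inner) (simp add: psd_matrix_def transpose_diff)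
  finally have "m * (u \<bullet> (C *v u) + u \<bullet> (B *v u)) = 0"
    using CB eig by (simp add: matrix_vector_mult_scaleR inner_commute algebra_simps)
  moreover have "0 \<le> u \<bullet> (C *v u)" "0 \<le> u \<bullet> (B *v u)"
    using B C by (auto simp: psd_matrix_def)
  ultimately have "m = 0 \<or> (u \<bullet> (C *v u) = 0 \<and> u \<bullet> (B *v u) = 0)"
    by auto
  then show ?thesis
  proof
    assume "m = 0"
    then show ?thesis
      using eig by simp
  next
    assume "u \<bullet> (C *v u) = 0 \<and> u \<bullet> (B *v u) = 0"
    then have "C *v u = 0" "B *v u = 0"
      using psd_quadratic_zero_imp_zero[OF B] psd_quadratic_zero_imp_zero[OF C] by auto
    then show ?thesis
      by (simp add: matrix_vector_mult_diff_rdistrib)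
  qed
qed

lemma psd_sqrt_unique:
  fixes B C :: "real^'n^'n"
  assumes B: "psd_matrix B" and C: "psd_matrix C" and BC: "B ** B = C ** C"
  shows "B = C"
proof -
  have "transpose (C - B) = C - B"
    using B C by (simp add: psd_matrix_def transpose_diff)
  then obtain F where F: "orthonormal_eigenbasis (C - B) UNIV F"
    using symmetric_orthonormal_eigenbasis[of "C - B" UNIV] by auto
  then have expansion: "\<And>x. x = (\<Sum>u\<in>F. (u \<bullet> x) *\<^sub>R u)"
    by (simp add: orthonormal_eigenbasis_def)
  have zero: "(C - B) *v u = 0" if "u \<in> F" for u
    using psd_sqrt_difference_eigenvector[OF B C BC] F that
    unfolding orthonormal_eigenbasis_def by blast
  have "(C - B) *v x = 0" for x
  proof -
    have "(C - B) *v x = (\<Sum>u\<in>F. (u \<bullet> x) *\<^sub>R ((C - B) *v u))"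
      by (subst expansion)
        (simp add: linear_sum[OF matrix_vector_mul_linear] matrix_vector_mult_scaleR)
    then show ?thesis
      using zero by simp
  qed
  then show ?thesis
    by (metis matrix_eq matrix_vector_mult_0 matrix_vector_mult_diff_rdistrib right_minus_eq)
qed

lemma msqrt_square:
  fixes A :: "real^'n^'n"
  assumes "psd_matrix A"
  shows "msqrt A ** msqrt A = A"
proof -
  have "\<exists>!B. psd_matrix B \<and> B ** B = A"
    using psd_sqrt_exists[OF assms] psd_sqrt_unique by metis
  then have "psd_matrix (msqrt A) \<and> msqrt A ** msqrt A = A"
    unfolding msqrt_def psd_matrix_def conj_assoc by (rule theI')
  then show ?thesis ..
qed

lemma opnorm_msqrt_pos:
  fixes A :: "real^'n^'n"
  assumes sym: "transpose A = A" and pd: "\<forall>y. y \<noteq> 0 \<longrightarrow> 0 < y \<bullet> (A *v y)"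
  shows "0 < opnorm (msqrt A)"
proof -
  have "psd_matrix A"
    using sym pd by (metis inner_zero_left order_less_imp_le order_refl psd_matrix_def)
  then have sq: "msqrt A ** msqrt A = A"
    by (rule msqrt_square)
  have "A \<noteq> 0"
    using pd[rule_format, of "axis undefined 1"] by (auto simp: axis_eq_0_iff)
  then have "\<not> (\<forall>x. msqrt A *v x = 0)"
    using sq by (metis matrix_eq matrix_vector_mult_0 matrix_vector_mul_assoc)
  then show ?thesis
    unfolding opnorm_def using onorm_pos_lt[OF matrix_vector_mul_bounded_linear[of "msqrt A"]]
    by simp
qed

section \<open>A weighted entropy inequality\<close>

lemma powr_le_one_plus_powr:
  fixes t r q :: real
  assumes "0 \<le> t" "0 < r" "r \<le> q"
  shows "t powr r \<le> 1 + t powr q"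
proof (cases "t \<le> 1")
  case True
  then have "t powr r \<le> 1"
    using assms powr_mono2[of r t 1] by simp
  then show ?thesis
    using powr_ge_zero[of t q] by linarith
next
  case False
  then have "t powr r \<le> t powr q"
    using assms by (intro powr_mono) auto
  then show ?thesis
    by simp
qed

lemma powr_mult_ln_le:
  fixes t a c r :: real
  assumes "0 \<le> t" "0 < a" "0 < c"
  shows "a * (t powr r * ln t) \<le> t powr (r + a) / c - (1 - ln c) * t powr r"
proof (cases "t = 0")
  case False
  then have t: "0 < t" using assms(1) by simp
  have "ln (t powr a / c) \<le> t powr a / c - 1"
    using t assms by (intro ln_le_minus_one) simp
  then have "a * ln t \<le> t powr a / c - 1 + ln c"
    using t assms by (simp add: ln_div ln_powr)
  then have "t powr r * (a * ln t) \<le> t powr r * (t powr a / c - 1 + ln c)"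
    by (rule mult_left_mono) simp
  then show ?thesis
    by (simp add: powr_add algebra_simps)
qed simp

lemma abs_powr_mult_ln_le:
  fixes t a r :: real
  assumes t: "0 \<le> t" and a: "0 < a" and r: "1 \<le> r"
  shows "\<bar>t powr r * ln t\<bar> \<le> 1 + t powr (r + a) / a"
proof (cases "t \<le> 1")
  case True
  show ?thesis
  proof (cases "t = 0")
    case False
    then have "0 < t" using t by simp
    have "- ln t \<le> 1 / t"
      using ln_le_minus_one[of "1 / t"] \<open>0 < t\<close> by (simp add: ln_div)
    moreover have "t powr r \<le> t"
      using powr_mono'[OF r, of t] True \<open>0 < t\<close> by simp
    ultimately have "t powr r * (- ln t) \<le> t * (1 / t)"
      using True \<open>0 < t\<close> by (intro mult_mono) auto
    moreover have "ln t \<le> 0"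
      using True \<open>0 < t\<close> by simp
    ultimately have "\<bar>t powr r * ln t\<bar> \<le> 1"
      using \<open>0 < t\<close> by (simp add: abs_mult abs_of_nonpos)
    then show ?thesis
      using a t by (smt (verit) divide_nonneg_pos powr_ge_zero)
  qed simp
next
  case False
  have "a * ln t \<le> t powr a"
    using ln_le_minus_one[of "t powr a"] False by (simp add: ln_powr)
  then have "ln t \<le> t powr a / a"
    using a by (simp add: field_simps)
  then have "t powr r * ln t \<le> t powr r * (t powr a / a)"
    by (rule mult_left_mono) simp
  moreover have "0 \<le> ln t"
    using False by simp
  ultimately show ?thesis
    using False by (simp add: powr_add)
qed

lemma mult_ln_div_le_eps_powr:
  fixes S B w \<epsilon> p :: real
  assumes "0 < S" "S \<le> B" "0 < w" "0 < \<epsilon>" "0 < p"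
  shows "p * ln (S / w) \<le> \<epsilon> * (B / w) powr p - ln \<epsilon>"
proof -
  have "p * ln (S / w) \<le> p * ln (B / w)"
    using assms by (intro mult_left_mono) (simp_all add: divide_right_mono)
  also have "\<dots> = ln (\<epsilon> * (B / w) powr p) - ln \<epsilon>"
    using assms by (simp add: ln_mult ln_powr)
  also have "\<dots> \<le> \<epsilon> * (B / w) powr p - 1 - ln \<epsilon>"
    using assms by (simp add: ln_le_minus_one)
  finally show ?thesis
    by simp
qed

lemma set_integrable_nonneg_finite:
  fixes h :: "'a \<Rightarrow> real"
  assumes "h \<in> borel_measurable M" "\<And>x. 0 \<le> h x" "A \<in> sets M"
    and "(\<integral>\<^sup>+x\<in>A. ennreal (h x) \<partial>M) < \<infinity>"
  shows "set_integrable M A h"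
proof -
  have "(\<integral>\<^sup>+x. ennreal (norm (indicator A x *\<^sub>R h x)) \<partial>M) = (\<integral>\<^sup>+x\<in>A. ennreal (h x) \<partial>M)"
    using assms(2) by (intro nn_integral_cong) (simp split: split_indicator)
  then show ?thesis
    unfolding set_integrable_def using assms by (intro integrableI_bounded) simp_all
qed

lemma set_integral_nonneg_eq_nn_integral:
  fixes h :: "'a \<Rightarrow> real"
  assumes "h \<in> borel_measurable M" "\<And>x. 0 \<le> h x" "A \<in> sets M"
    and "(\<integral>\<^sup>+x\<in>A. ennreal (h x) \<partial>M) < \<infinity>"
  shows "(LINT x:A|M. h x) = enn2real (\<integral>\<^sup>+x\<in>A. ennreal (h x) \<partial>M)"
proof -
  have "(\<integral>\<^sup>+x\<in>A. ennreal (h x) \<partial>M) = (\<integral>\<^sup>+x. ennreal (indicator A x *\<^sub>R h x) \<partial>M)"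
    using assms(2) by (intro nn_integral_cong) (simp split: split_indicator)
  also have "\<dots> = ennreal (LINT x:A|M. h x)"
    unfolding set_lebesgue_integral_def
    using set_integrable_nonneg_finite[OF assms] assms(2)
    by (intro nn_integral_eq_integral) (simp_all add: set_integrable_def)
  moreover have "0 \<le> (LINT x:A|M. h x)"
    unfolding set_lebesgue_integral_def using assms(2)
    by (intro Bochner_Integration.integral_nonneg) simp
  ultimately show ?thesis
    by simp
qed

lemma nn_set_integral_finite_of_set_integrable:
  fixes h :: "'a \<Rightarrow> real"
  assumes "set_integrable M A h" "\<And>x. 0 \<le> h x"
  shows "(\<integral>\<^sup>+x\<in>A. ennreal (h x) \<partial>M) < \<infinity>"
proof -
  have "(\<integral>\<^sup>+x\<in>A. ennreal (h x) \<partial>M) = (\<integral>\<^sup>+x. ennreal (norm (indicator A x *\<^sub>R h x)) \<partial>M)"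
    using assms(2) by (intro nn_integral_cong) (simp split: split_indicator)
  then show ?thesis
    using assms(1) by (simp add: set_integrable_def integrable_iff_bounded)
qed

lemma wnorm_powr:
  assumes "0 < s"
  shows "wnorm v \<Omega> s u powr s = enn2real (\<integral>\<^sup>+x\<in>\<Omega>. ennreal (\<bar>u x\<bar> powr s * v x) \<partial>lebesgue)"
  using assms by (simp add: wnorm_def powr_powr powr_one)

lemma wnorm_pos:
  assumes \<Omega>: "\<Omega> \<in> sets lebesgue"
    and meas [measurable]: "u \<in> borel_measurable lebesgue" "v \<in> borel_measurable lebesgue"
    and v_pos: "AE x in lebesgue. x \<in> \<Omega> \<longrightarrow> 0 < v x"
    and u_ne: "\<not> (AE x in lebesgue. x \<in> \<Omega> \<longrightarrow> u x = 0)"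
    and fin: "(\<integral>\<^sup>+x\<in>\<Omega>. ennreal (\<bar>u x\<bar> powr s * v x) \<partial>lebesgue) < \<infinity>"
  shows "0 < wnorm v \<Omega> s u"
proof -
  have "(\<integral>\<^sup>+x\<in>\<Omega>. ennreal (\<bar>u x\<bar> powr s * v x) \<partial>lebesgue) \<noteq> 0"
  proof
    assume "(\<integral>\<^sup>+x\<in>\<Omega>. ennreal (\<bar>u x\<bar> powr s * v x) \<partial>lebesgue) = 0"
    then have "AE x in lebesgue. ennreal (\<bar>u x\<bar> powr s * v x) * indicator \<Omega> x = 0"
      using \<Omega> by (subst nn_integral_0_iff_AE[symmetric]) auto
    with v_pos have "AE x in lebesgue. x \<in> \<Omega> \<longrightarrow> u x = 0"
      by eventually_elim (auto simp: ennreal_eq_0_iff mult_le_0_iff)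
    with u_ne show False ..
  qed
  then have "0 < enn2real (\<integral>\<^sup>+x\<in>\<Omega>. ennreal (\<bar>u x\<bar> powr s * v x) \<partial>lebesgue)"
    using fin by (simp add: enn2real_positive_iff zero_less_iff_neq_zero)
  then show ?thesis
    by (simp add: wnorm_def)
qed

lemma weighted_moment_finite_mono:
  assumes \<Omega>: "\<Omega> \<in> sets lebesgue"
    and meas [measurable]: "u \<in> borel_measurable lebesgue" "v \<in> borel_measurable lebesgue"
    and v: "\<And>x. 0 \<le> v x" "set_integrable lebesgue \<Omega> v"
    and rq: "0 < r" "r \<le> q"
    and fin: "(\<integral>\<^sup>+x\<in>\<Omega>. ennreal (\<bar>u x\<bar> powr q * v x) \<partial>lebesgue) < \<infinity>"
  shows "(\<integral>\<^sup>+x\<in>\<Omega>. ennreal (\<bar>u x\<bar> powr r * v x) \<partial>lebesgue) < \<infinity>"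
proof -
  have "(\<integral>\<^sup>+x\<in>\<Omega>. ennreal (\<bar>u x\<bar> powr r * v x) \<partial>lebesgue)
      \<le> (\<integral>\<^sup>+x\<in>\<Omega>. (ennreal (v x) + ennreal (\<bar>u x\<bar> powr q * v x)) \<partial>lebesgue)"
  proof (intro nn_set_integral_mono AE_I2 impI)
    fix x
    have "\<bar>u x\<bar> powr r * v x \<le> (1 + \<bar>u x\<bar> powr q) * v x"
      using powr_le_one_plus_powr[of "\<bar>u x\<bar>" r q] rq v(1)[of x] by (intro mult_right_mono) auto
    then show "ennreal (\<bar>u x\<bar> powr r * v x) \<le> ennreal (v x) + ennreal (\<bar>u x\<bar> powr q * v x)"
      using v(1)[of x] by (simp add: ennreal_plus[symmetric] distrib_right del: ennreal_plus)
  qed (use \<Omega> in auto)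
  also have "\<dots> = (\<integral>\<^sup>+x\<in>\<Omega>. ennreal (v x) \<partial>lebesgue)
      + (\<integral>\<^sup>+x\<in>\<Omega>. ennreal (\<bar>u x\<bar> powr q * v x) \<partial>lebesgue)"
    using \<Omega> by (intro nn_set_integral_add) auto
  also have "\<dots> < \<infinity>"
    using fin nn_set_integral_finite_of_set_integrable[OF v(2) v(1)] by simp
  finally show ?thesis .
qed

lemma set_integrable_weighted_entropy:
  assumes \<Omega>: "\<Omega> \<in> sets lebesgue"
    and meas [measurable]: "u \<in> borel_measurable lebesgue" "v \<in> borel_measurable lebesgue"
    and v: "\<And>x. 0 \<le> v x" "set_integrable lebesgue \<Omega> v"
    and rq: "1 \<le> r" "r < q"
    and fin: "(\<integral>\<^sup>+x\<in>\<Omega>. ennreal (\<bar>u x\<bar> powr q * v x) \<partial>lebesgue) < \<infinity>"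
    and w: "0 < w"
  shows "set_integrable lebesgue \<Omega> (\<lambda>x. \<bar>u x\<bar> powr r / w powr r * ln (\<bar>u x\<bar> / w) * v x)"
proof -
  define a where "a = q - r"
  have a: "0 < a" and q: "q = r + a"
    using rq by (simp_all add: a_def)
  let ?bound = "\<lambda>x. v x + 1 / (a * w powr q) * (\<bar>u x\<bar> powr q * v x)"
  have "set_integrable lebesgue \<Omega> (\<lambda>x. \<bar>u x\<bar> powr q * v x)"
    using \<Omega> v(1) fin by (intro set_integrable_nonneg_finite) auto
  then have "set_integrable lebesgue \<Omega> ?bound"
    using v(2) by (intro set_integral_add(1) set_integrable_mult_right)
  then show ?thesis
  proof (rule set_integrable_bound)
    show "set_borel_measurable lebesgue \<Omega> (\<lambda>x. \<bar>u x\<bar> powr r / w powr r * ln (\<bar>u x\<bar> / w) * v x)"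
      unfolding set_borel_measurable_def using \<Omega> by measurable
    show "AE x in lebesgue. x \<in> \<Omega> \<longrightarrow>
        norm (\<bar>u x\<bar> powr r / w powr r * ln (\<bar>u x\<bar> / w) * v x) \<le> norm (?bound x)"
    proof (intro AE_I2 impI)
      fix x
      have "\<bar>(\<bar>u x\<bar> / w) powr r * ln (\<bar>u x\<bar> / w)\<bar> \<le> 1 + (\<bar>u x\<bar> / w) powr q / a"
        unfolding q using w a rq by (intro abs_powr_mult_ln_le) auto
      then have "\<bar>\<bar>u x\<bar> powr r / w powr r * ln (\<bar>u x\<bar> / w)\<bar> * v x
          \<le> (1 + \<bar>u x\<bar> powr q / (a * w powr q)) * v x"
        using v(1)[of x] by (intro mult_right_mono) (simp_all add: powr_divide mult.commute)
      moreover have "0 \<le> ?bound x"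
        using v(1)[of x] a w by simp
      ultimately show "norm (\<bar>u x\<bar> powr r / w powr r * ln (\<bar>u x\<bar> / w) * v x) \<le> norm (?bound x)"
        using v(1)[of x] by (simp add: abs_mult algebra_simps)
    qed
  qed
qed

text \<open>Integrating \<open>powr_mult_ln_le\<close> against \<open>v\<close> with \<open>t = \<bar>u\<bar> / \<parallel>u\<parallel>\<^sub>r\<close> and the optimal
  choice \<open>c = (\<parallel>u\<parallel>\<^sub>q / \<parallel>u\<parallel>\<^sub>r)\<^sup>q\<close> makes the right-hand side collapse to \<open>ln c\<close>.\<close>
lemma weighted_entropy_le_ln_norm_ratio:
  assumes \<Omega>: "\<Omega> \<in> sets lebesgue"
    and meas [measurable]: "u \<in> borel_measurable lebesgue" "v \<in> borel_measurable lebesgue"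
    and v: "\<And>x. 0 \<le> v x" "set_integrable lebesgue \<Omega> v"
    and rq: "1 \<le> r" "r < q"
    and fin: "(\<integral>\<^sup>+x\<in>\<Omega>. ennreal (\<bar>u x\<bar> powr q * v x) \<partial>lebesgue) < \<infinity>"
    and w: "0 < wnorm v \<Omega> r u" and S: "0 < wnorm v \<Omega> q u"
  shows "(q - r) * (LINT x:\<Omega>|lebesgue.
             \<bar>u x\<bar> powr r / wnorm v \<Omega> r u powr r * ln (\<bar>u x\<bar> / wnorm v \<Omega> r u) * v x)
           \<le> q * ln (wnorm v \<Omega> q u / wnorm v \<Omega> r u)"
proof -
  define w where "w = wnorm v \<Omega> r u"
  define S where "S = wnorm v \<Omega> q u"
  define c where "c = (S / w) powr q"
  define h where "h x = \<bar>u x\<bar> powr r / w powr r * ln (\<bar>u x\<bar> / w) * v x" for x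
  have w: "0 < w" and S: "0 < S" and c: "0 < c"
    using w S by (simp_all add: w_def S_def c_def)
  have fin_r: "(\<integral>\<^sup>+x\<in>\<Omega>. ennreal (\<bar>u x\<bar> powr r * v x) \<partial>lebesgue) < \<infinity>"
    using rq by (intro weighted_moment_finite_mono[OF \<Omega> meas v _ _ fin]) auto
  have moment: "set_integrable lebesgue \<Omega> (\<lambda>x. \<bar>u x\<bar> powr s * v x)"
    "(LINT x:\<Omega>|lebesgue. \<bar>u x\<bar> powr s * v x) = wnorm v \<Omega> s u powr s"
    if "0 < s" "(\<integral>\<^sup>+x\<in>\<Omega>. ennreal (\<bar>u x\<bar> powr s * v x) \<partial>lebesgue) < \<infinity>" for s
    using that \<Omega> v(1)
    by (auto intro!: set_integrable_nonneg_finite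
        simp: set_integral_nonneg_eq_nn_integral wnorm_powr)
  have r: "0 < r" and q: "0 < q"
    using rq by auto
  let ?R = "\<lambda>x. 1 / (w powr q * c) * (\<bar>u x\<bar> powr q * v x)
    - (1 - ln c) / w powr r * (\<bar>u x\<bar> powr r * v x)"
  have "(q - r) * (LINT x:\<Omega>|lebesgue. h x) = (LINT x:\<Omega>|lebesgue. (q - r) * h x)"
    by simp
  also have "\<dots> \<le> (LINT x:\<Omega>|lebesgue. ?R x)"
  proof (rule set_integral_mono)
    show "set_integrable lebesgue \<Omega> (\<lambda>x. (q - r) * h x)"
      unfolding h_def using set_integrable_weighted_entropy[OF \<Omega> meas v rq fin w]
      by (rule set_integrable_mult_right)
    show "set_integrable lebesgue \<Omega> ?R"
      using moment(1)[OF r fin_r] moment(1)[OF q fin]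
      by (intro set_integral_diff(1) set_integrable_mult_right)
  next
    fix x
    have "(q - r) * ((\<bar>u x\<bar> / w) powr r * ln (\<bar>u x\<bar> / w))
        \<le> (\<bar>u x\<bar> / w) powr (r + (q - r)) / c - (1 - ln c) * (\<bar>u x\<bar> / w) powr r"
      using rq w c by (intro powr_mult_ln_le) auto
    then have "(q - r) * ((\<bar>u x\<bar> / w) powr r * ln (\<bar>u x\<bar> / w)) * v x
        \<le> ((\<bar>u x\<bar> / w) powr q / c - (1 - ln c) * (\<bar>u x\<bar> / w) powr r) * v x"
      using v(1)[of x] by (intro mult_right_mono) auto
    then show "(q - r) * h x \<le> ?R x"
      by (simp add: h_def powr_divide algebra_simps)
  qed
  also have "\<dots> = 1 / (w powr q * c) * S powr q - (1 - ln c) / w powr r * w powr r"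
    using moment[OF r fin_r] moment[OF q fin]
    by (simp add: set_integral_diff(2) set_integrable_mult_right w_def S_def)
  also have "\<dots> = ln c"
    using w S by (simp add: c_def powr_divide)
  also have "\<dots> = q * ln (S / w)"
    using w S by (simp add: c_def ln_powr)
  finally show ?thesis
    by (simp add: h_def w_def S_def)
qed

lemma hypH_weight_pos:
  assumes "hypH Q v \<Omega> p"
  shows "AE x in lebesgue. x \<in> \<Omega> \<longrightarrow> 0 < v x"
proof -
  have "AE x in lebesgue. x \<in> \<Omega> \<longrightarrow> transpose (Q x) = Q x \<and> (\<forall>y. y \<noteq> 0 \<longrightarrow> 0 < y \<bullet> (Q x *v y))"
    and "AE x in lebesgue. x \<in> \<Omega> \<longrightarrow> opnorm (msqrt (Q x)) powr p \<le> v x"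
    using assms by (simp_all add: hypH_def)
  then show ?thesis
  proof eventually_elim
    case (elim x)
    show ?case
    proof
      assume "x \<in> \<Omega>"
      then have "0 < opnorm (msqrt (Q x))"
        using elim by (intro opnorm_msqrt_pos) auto
      then have "0 < opnorm (msqrt (Q x)) powr p"
        by simp
      then show "0 < v x"
        using elim \<open>x \<in> \<Omega>\<close> by linarith
    qed
  qed
qed

theorem lemma6p1:
  fixes Q :: "real^'n \<Rightarrow> real^'n^'n" and v :: "real^'n \<Rightarrow> real"
    and \<Omega> :: "(real^'n) set" and p \<sigma> M r \<epsilon> :: real
    and f :: "real^'n \<Rightarrow> real" and g :: "real^'n \<Rightarrow> real^'n"
  assumes "CARD('n) \<ge> 3"
    and "open \<Omega>" and "connected \<Omega>" and "bounded \<Omega>"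
    and "1 < p"
    and "hypH Q v \<Omega> p"
    and "M > 0" and "\<sigma> > 1" and "hypS Q v \<Omega> p \<sigma> M"
    and "H0 Q v \<Omega> p f g"
    and "\<not> (AE x in lebesgue. x \<in> \<Omega> \<longrightarrow> f x = 0)"
    and "1 \<le> r" and "r < \<sigma> * p"
    and "\<epsilon> > 0"
  shows "set_integrable lebesgue \<Omega>
           (\<lambda>x. \<bar>f x\<bar> powr r / wnorm v \<Omega> r f powr r * ln (\<bar>f x\<bar> / wnorm v \<Omega> r f) * v x)
       \<and> (LINT x:\<Omega>|lebesgue. \<bar>f x\<bar> powr r / wnorm v \<Omega> r f powr r * ln (\<bar>f x\<bar> / wnorm v \<Omega> r f) * v x)
         \<le> \<sigma> / (\<sigma> * p - r) *
            (\<epsilon> * M powr p * Qnorm Q \<Omega> p g powr p / wnorm v \<Omega> r f powr p - ln \<epsilon>)"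
proof -
  let ?w = "wnorm v \<Omega> r f" and ?S = "wnorm v \<Omega> (\<sigma> * p) f" and ?G = "Qnorm Q \<Omega> p g"
  have \<Omega>: "\<Omega> \<in> sets lebesgue"
    using \<open>open \<Omega>\<close> \<open>bounded \<Omega>\<close> by (simp add: fmeasurableD lmeasurable_open)
  have meas: "f \<in> borel_measurable lebesgue" "v \<in> borel_measurable lebesgue"
    and v: "\<And>x. 0 \<le> v x" "set_integrable lebesgue \<Omega> v"
    using \<open>H0 Q v \<Omega> p f g\<close> \<open>hypH Q v \<Omega> p\<close> by (simp_all add: H0_def hypH_def)
  have fin: "(\<integral>\<^sup>+x\<in>\<Omega>. ennreal (\<bar>f x\<bar> powr (\<sigma> * p) * v x) \<partial>lebesgue) < \<infinity>"
    and sobolev: "?S \<le> M * ?G"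
    using \<open>hypS Q v \<Omega> p \<sigma> M\<close> \<open>H0 Q v \<Omega> p f g\<close> by (simp_all add: hypS_def)
  have rq: "1 \<le> r" "r < \<sigma> * p" by fact+
  have "(\<integral>\<^sup>+x\<in>\<Omega>. ennreal (\<bar>f x\<bar> powr r * v x) \<partial>lebesgue) < \<infinity>"
    using rq by (intro weighted_moment_finite_mono[OF \<Omega> meas v _ _ fin]) auto
  then have w: "0 < ?w" and S: "0 < ?S"
    using wnorm_pos[OF \<Omega> meas hypH_weight_pos[OF \<open>hypH Q v \<Omega> p\<close>]
        \<open>\<not> (AE x in lebesgue. x \<in> \<Omega> \<longrightarrow> f x = 0)\<close>] fin
    by auto
  have "(\<sigma> * p - r) * (LINT x:\<Omega>|lebesgue. \<bar>f x\<bar> powr r / ?w powr r * ln (\<bar>f x\<bar> / ?w) * v x)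
      \<le> \<sigma> * (p * ln (?S / ?w))"
    using weighted_entropy_le_ln_norm_ratio[OF \<Omega> meas v rq fin w S] by (simp add: mult.assoc)
  also have "\<dots> \<le> \<sigma> * (\<epsilon> * (M * ?G / ?w) powr p - ln \<epsilon>)"
    using S w sobolev \<open>1 < p\<close> \<open>\<sigma> > 1\<close> \<open>\<epsilon> > 0\<close>
    by (intro mult_left_mono mult_ln_div_le_eps_powr) auto
  also have "(M * ?G / ?w) powr p = M powr p * ?G powr p / ?w powr p"
    using \<open>M > 0\<close> by (simp add: powr_divide powr_mult Qnorm_def)
  finally have "(LINT x:\<Omega>|lebesgue. \<bar>f x\<bar> powr r / ?w powr r * ln (\<bar>f x\<bar> / ?w) * v x)
      \<le> \<sigma> * (\<epsilon> * (M powr p * ?G powr p / ?w powr p) - ln \<epsilon>) / (\<sigma> * p - r)"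
    using rq by (simp add: pos_le_divide_eq mult.commute)
  then show ?thesis
    using set_integrable_weighted_entropy[OF \<Omega> meas v rq fin w] by (simp add: mult.assoc)
qed

end
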